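(* Let $\varphi_0\in\mathbb{R}$ and let $v$ be a smooth function with $v(\varphi)>0$ and $v'(\varphi)>0$ for all $\varphi\ge\varphi_0$. Set $\mathfrak{v}(\varphi)=(\log\sqrt{v(\varphi)})'$ and $\mathfrak{R}_0=\{(\varphi,\mathfrak{h}):\varphi_0\le\varphi<\infty,\ 1\le\mathfrak{h}<\infty\}$. Let $\mathfrak{h}$ be the solution of $$\mathfrak{h}'=\sqrt{\mathfrak{h}^2-1}-\mathfrak{v}(\varphi)\,\mathfrak{h},\qquad \mathfrak{h}(\varphi_0)=\mathfrak{h}_0>1.$$ Then either (type A) $\mathfrak{h}$ leaves $\mathfrak{R}_0$ by reaching the boundary $\mathfrak{h}=1$ at some finite $\varphi_1>\varphi_0$, with slope $\mathfrak{h}'(\varphi_1)=-\mathfrak{v}(\varphi_1)<0$ there, or (type B) it exists and remains in $\mathfrak{R}_0$ for all $\varphi>\varphi_0$.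
   Context: The function $\mathfrak{h}=h/\sqrt{v}$ is the "modified Hubble parameter": $h$ solves $h'=\sqrt{h^2-v}$ on $\{h>\sqrt v\}$ if and only if $\mathfrak{h}=h/\sqrt v$ solves the displayed equation on $\{\mathfrak{h}>1\}$. *)

theory Defs
  imports "HOL-Analysis.Analysis"
begin

definition smooth_fun :: "(real \<Rightarrow> real) \<Rightarrow> bool" where
  "smooth_fun f \<longleftrightarrow> (\<forall>n x. ((deriv ^^ n) f) differentiable (at x))"

definition mod_v :: "(real \<Rightarrow> real) \<Rightarrow> real \<Rightarrow> real" where
  "mod_v v \<phi> = deriv (\<lambda>x. ln (sqrt (v x))) \<phi>"

definition solves_mod_eq :: "(real \<Rightarrow> real) \<Rightarrow> (real \<Rightarrow> real) \<Rightarrow> real set \<Rightarrow> bool" where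
  "solves_mod_eq v h S \<longleftrightarrow>
     (\<forall>\<phi>\<in>S. (h has_real_derivative (sqrt ((h \<phi>)\<^sup>2 - 1) - mod_v v \<phi> * h \<phi>)) (at \<phi> within S))"

end

theory Submission
  imports Defs
begin

text \<open>
  The Hubble parameter \<open>H = h * sqrt v\<close> satisfies \<open>H' = sqrt (H\<^sup>2 - v)\<close>. This right-hand
  side is not Lipschitz where \<open>H = sqrt v\<close>, but it is nondecreasing in \<open>H\<close>, so a global
  solution on \<open>[\<phi>\<^sub>0, \<infinity>)\<close> is the limit of increasing Picard iterates, which exponential growth
  bounds from above. Then \<open>h = H / sqrt v\<close> either stays \<open>\<ge> 1\<close> forever, or reaches \<open>1\<close> at a
  first point \<open>\<phi>\<^sub>1\<close>, where the square root vanishes and the slope is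
  \<open>- mod_v v \<phi>\<^sub>1 = - v'(\<phi>\<^sub>1) / (2 v(\<phi>\<^sub>1)) < 0\<close>.
\<close>

lemma integral_exp_shift:
  fixes a t K :: real
  assumes "a \<le> t"
  shows "integral {a..t} (\<lambda>s. K * exp (s - a)) = K * exp (t - a) - K"
proof -
  have "((\<lambda>s. K * exp (s - a)) has_integral K * exp (t - a) - K * exp (a - a)) {a..t}"
    by (rule fundamental_theorem_of_calculus[OF assms])
      (auto intro!: derivative_eq_intros simp flip: has_real_derivative_iff_has_vector_derivative)
  then have "((\<lambda>s. K * exp (s - a)) has_integral K * exp (t - a) - K) {a..t}" by simp
  then show ?thesis by (rule integral_unique)
qed

locale monotone_scalar_ode =
  fixes f :: "real \<Rightarrow> real \<Rightarrow> real" and l :: "real \<Rightarrow> real" and a c :: real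
  assumes f_continuous: "continuous_on ({a..} \<times> UNIV) (\<lambda>(t, y). f t y)"
    and l_continuous: "continuous_on {a..} l"
    and f_mono: "\<And>t y z. a \<le> t \<Longrightarrow> y \<le> z \<Longrightarrow> f t y \<le> f t z"
    and l_le_f: "\<And>t y. a \<le> t \<Longrightarrow> l t \<le> f t y"
    and f_le_max: "\<And>t y. a \<le> t \<Longrightarrow> f t y \<le> max y 0"
begin

text \<open>Picard iterates for the derivative \<open>y'\<close>, started from the lower bound \<open>l\<close>;
  since \<open>f\<close> is monotone in \<open>y\<close> they increase.\<close>

primrec slope :: "nat \<Rightarrow> real \<Rightarrow> real" where
  "slope 0 = l"
| "slope (Suc n) = (\<lambda>t. f t (c + integral {a..t} (slope n)))"

lemma continuous_on_f_comp:
  assumes "continuous_on S u" "S \<subseteq> {a..}"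
  shows "continuous_on S (\<lambda>t. f t (u t))"
proof -
  have "continuous_on S (\<lambda>t. (t, u t))" using assms(1) by (intro continuous_intros)
  then show ?thesis using continuous_on_compose2[OF f_continuous] assms(2) by fastforce
qed

lemma isCont_f:
  assumes "a \<le> t"
  shows "isCont (f t) y"
proof -
  have "continuous_on UNIV (Pair t)" by (intro continuous_intros)
  then have "continuous_on UNIV (f t)"
    using continuous_on_compose2[OF f_continuous, of UNIV "Pair t"] assms by auto
  then show ?thesis by (simp add: continuous_on_eq_continuous_at)
qed

lemma slope_continuous: "continuous_on {a..b} (slope n)"
proof (induction n)
  case 0
  show ?case using continuous_on_subset[OF l_continuous] by auto
next
  case (Suc n)
  have "continuous_on {a..b} (\<lambda>t. c + integral {a..t} (slope n))"
    using indefinite_integral_continuous_1[OF integrable_continuous_interval[OF Suc]]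
    by (intro continuous_intros)
  then show ?case by (auto intro: continuous_on_f_comp)
qed

lemma slope_integrable: "slope n integrable_on {a..b}"
  by (rule integrable_continuous_interval[OF slope_continuous])

lemma slope_bounds: "a \<le> t \<Longrightarrow> l t \<le> slope n t \<and> slope n t \<le> \<bar>c\<bar> * exp (t - a)"
proof (induction n arbitrary: t)
  case 0
  have "l t \<le> 0" using l_le_f[OF 0, of 0] f_le_max[OF 0, of 0] by simp
  then show ?case by (simp add: order_trans[OF _ mult_nonneg_nonneg])
next
  case (Suc n)
  have "integral {a..t} (slope n) \<le> integral {a..t} (\<lambda>s. \<bar>c\<bar> * exp (s - a))"
    using Suc.IH by (intro integral_le slope_integrable integrable_continuous_interval continuous_intros) auto
  then have "c + integral {a..t} (slope n) \<le> \<bar>c\<bar> * exp (t - a)"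
    using integral_exp_shift[OF Suc.prems, of "\<bar>c\<bar>"] by linarith
  then have "max (c + integral {a..t} (slope n)) 0 \<le> \<bar>c\<bar> * exp (t - a)" by simp
  then show ?case using l_le_f[OF Suc.prems] order_trans[OF f_le_max[OF Suc.prems]] by simp
qed

lemma slope_mono: "a \<le> t \<Longrightarrow> slope n t \<le> slope (Suc n) t"
proof (induction n arbitrary: t)
  case 0
  then show ?case by (simp add: l_le_f)
next
  case (Suc n)
  have "integral {a..t} (slope n) \<le> integral {a..t} (slope (Suc n))"
    using Suc.IH by (intro integral_le slope_integrable) auto
  then show ?case using f_mono[OF Suc.prems] by simp
qed

theorem solution_exists:
  "\<exists>y. y a = c \<and> (\<forall>t\<ge>a. (y has_real_derivative f t (y t)) (at t within {a..}))"
proof -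
  define g where "g t = (SUP n. slope n t)" for t
  have slope_lim: "(\<lambda>n. slope n t) \<longlonglongrightarrow> g t" if "a \<le> t" for t
    unfolding g_def
  proof (rule LIMSEQ_incseq_SUP)
    show "bdd_above (range (\<lambda>n. slope n t))"
      using slope_bounds[OF that] by (intro bdd_aboveI[where M = "\<bar>c\<bar> * exp (t - a)"]) auto
    show "incseq (\<lambda>n. slope n t)"
      using slope_mono[OF that] by (rule incseq_SucI)
  qed
  have g_integral: "g integrable_on {a..t} \<and>
      (\<lambda>n. integral {a..t} (slope n)) \<longlonglongrightarrow> integral {a..t} g" for t
  proof (rule monotone_convergence_increasing[OF slope_integrable])
    have "integral {a..t} l \<le> integral {a..t} (slope n) \<and>
        integral {a..t} (slope n) \<le> integral {a..t} (\<lambda>s. \<bar>c\<bar> * exp (s - a))" for n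
      using slope_bounds
      by (intro conjI integral_le slope_integrable integrable_continuous_interval continuous_intros
          continuous_on_subset[OF l_continuous]) auto
    then show "bounded (range (\<lambda>n. integral {a..t} (slope n)))"
      by (intro bounded_subset[OF bounded_closed_interval[of "integral {a..t} l"
            "integral {a..t} (\<lambda>s. \<bar>c\<bar> * exp (s - a))"]]) auto
  qed (use slope_mono slope_lim in auto)
  define y where "y t = c + integral {a..t} g" for t
  have y_continuous: "continuous_on {a..b} y" for b
    unfolding y_def using indefinite_integral_continuous_1[OF conjunct1[OF g_integral]]
    by (intro continuous_intros)
  have g_eq: "g t = f t (y t)" if "a \<le> t" for t
  proof (rule LIMSEQ_unique)
    show "(\<lambda>n. slope (Suc n) t) \<longlonglongrightarrow> g t"
      using slope_lim[OF that] by (rule LIMSEQ_Suc)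
    have "(\<lambda>n. c + integral {a..t} (slope n)) \<longlonglongrightarrow> y t"
      unfolding y_def using g_integral by (intro tendsto_intros) auto
    then show "(\<lambda>n. slope (Suc n) t) \<longlonglongrightarrow> f t (y t)"
      using isCont_tendsto_compose[OF isCont_f[OF that]] by simp
  qed
  have g_continuous: "continuous_on {a..b} g" for b
    using continuous_on_f_comp[OF y_continuous]
    by (rule continuous_on_cong[THEN iffD1, rotated 2]) (auto simp: g_eq)
  have "(y has_real_derivative f t (y t)) (at t within {a..})" if "a \<le> t" for t
  proof -
    have "(y has_real_derivative g t) (at t within {a..t + 1})"
      unfolding y_def using integral_has_real_derivative[OF g_continuous] that
      by (auto intro!: derivative_eq_intros)
    moreover have "at t within {a..t + 1} = at t within {a..}"
      by (rule at_within_nhd[where S="{..<t + 1}"]) auto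
    ultimately show ?thesis using g_eq[OF that] by simp
  qed
  moreover have "y a = c" by (simp add: y_def)
  ultimately show ?thesis by blast
qed

end

text \<open>Isabelle's \<open>sqrt\<close> is odd (\<open>sqrt (- x) = - sqrt x\<close>), so this clipped right-hand side
  is defined and nondecreasing for every \<open>y\<close>, and bounded below by \<open>- sqrt v\<close>.\<close>

lemma monotone_scalar_ode_hubble:
  fixes v :: "real \<Rightarrow> real"
  assumes v_continuous: "continuous_on UNIV v" and v_nonneg: "\<And>t. a \<le> t \<Longrightarrow> 0 \<le> v t"
  shows "monotone_scalar_ode (\<lambda>t y. sqrt ((max y 0)\<^sup>2 - v t)) (\<lambda>t. - sqrt (v t)) a"
proof
  have "continuous_on ({a..} \<times> UNIV) (\<lambda>p. sqrt ((max (snd p) 0)\<^sup>2 - v (fst p)))"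
    by (intro continuous_intros continuous_on_compose2[OF v_continuous]) auto
  then show "continuous_on ({a..} \<times> UNIV) (\<lambda>(t, y). sqrt ((max y 0)\<^sup>2 - v t))"
    by (simp add: case_prod_beta')
  show "continuous_on {a..} (\<lambda>t. - sqrt (v t))"
    by (intro continuous_intros continuous_on_subset[OF v_continuous]) auto
  fix t y assume t: "a \<le> t"
  show "- sqrt (v t) \<le> sqrt ((max y 0)\<^sup>2 - v t)"
    using real_sqrt_le_mono[of "- v t" "(max y 0)\<^sup>2 - v t"] by (simp add: real_sqrt_minus)
  show "sqrt ((max y 0)\<^sup>2 - v t) \<le> max y 0"
    using real_sqrt_le_mono[of "(max y 0)\<^sup>2 - v t" "(max y 0)\<^sup>2"] v_nonneg[OF t] by simp
  fix z assume "y \<le> z"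
  then show "sqrt ((max y 0)\<^sup>2 - v t) \<le> sqrt ((max z 0)\<^sup>2 - v t)"
    by (simp add: power_mono)
qed

lemma mod_v_eq:
  assumes "(v has_real_derivative v') (at t)" and "0 < v t"
  shows "mod_v v t = v' / (2 * v t)"
proof -
  have "((\<lambda>x. ln (sqrt (v x))) has_real_derivative v' / (2 * v t)) (at t)"
    using assms by (auto intro!: derivative_eq_intros simp: field_simps)
  then show ?thesis unfolding mod_v_def by (rule DERIV_imp_deriv)
qed

lemma modified_hubble_has_real_derivative:
  assumes H: "(H has_real_derivative sqrt ((max (H t) 0)\<^sup>2 - v t)) (at t within S)"
    and v: "(v has_real_derivative v') (at t)" and v_pos: "0 < v t"
  shows "((\<lambda>s. H s / sqrt (v s)) has_real_derivative
      sqrt ((max (H t / sqrt (v t)) 0)\<^sup>2 - 1) - v' / (2 * v t) * (H t / sqrt (v t))) (at t within S)"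
proof -
  let ?M = "max (H t) 0"
  have deriv: "((\<lambda>s. H s / sqrt (v s)) has_real_derivative
      (sqrt (?M\<^sup>2 - v t) * sqrt (v t) - H t * (v' / (2 * sqrt (v t)))) / (sqrt (v t) * sqrt (v t)))
      (at t within S)"
    using v_pos by (auto intro!: derivative_eq_intros H has_field_derivative_at_within[OF v]
        simp: divide_simps)
  have "max (H t / sqrt (v t)) 0 = ?M / sqrt (v t)"
    using v_pos by (auto simp: max_def divide_le_0_iff)
  moreover have "(?M / sqrt (v t))\<^sup>2 - 1 = (?M\<^sup>2 - v t) / v t"
    using v_pos by (simp add: power_divide field_simps)
  ultimately have sqrt_eq:
      "sqrt ((max (H t / sqrt (v t)) 0)\<^sup>2 - 1) = sqrt (?M\<^sup>2 - v t) / sqrt (v t)"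
    by (simp add: real_sqrt_divide)
  have "(sqrt (?M\<^sup>2 - v t) * sqrt (v t) - H t * (v' / (2 * sqrt (v t)))) / (sqrt (v t) * sqrt (v t))
      = sqrt (?M\<^sup>2 - v t) / sqrt (v t) - v' / (2 * v t) * (H t / sqrt (v t))"
    using v_pos by (simp add: field_simps)
  with deriv show ?thesis unfolding sqrt_eq by simp
qed

lemma modified_hubble_clipped_exists:
  fixes v :: "real \<Rightarrow> real"
  assumes v_deriv: "\<And>t. (v has_real_derivative deriv v t) (at t)"
    and v_pos: "\<And>t. a \<le> t \<Longrightarrow> 0 < v t"
  shows "\<exists>h. h a = h\<^sub>0 \<and> (\<forall>t\<ge>a.
    (h has_real_derivative sqrt ((max (h t) 0)\<^sup>2 - 1) - mod_v v t * h t) (at t within {a..}))"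
proof -
  have "continuous_on UNIV v"
    using v_deriv by (rule has_real_derivative_imp_continuous_on)
  then interpret hubble: monotone_scalar_ode "\<lambda>t y. sqrt ((max y 0)\<^sup>2 - v t)"
      "\<lambda>t. - sqrt (v t)" a "h\<^sub>0 * sqrt (v a)"
    by (rule monotone_scalar_ode_hubble) (use v_pos in \<open>simp add: less_imp_le\<close>)
  obtain H where H_a: "H a = h\<^sub>0 * sqrt (v a)"
    and H_deriv: "\<And>t. a \<le> t \<Longrightarrow>
      (H has_real_derivative sqrt ((max (H t) 0)\<^sup>2 - v t)) (at t within {a..})"
    using hubble.solution_exists by blast
  show ?thesis
  proof (intro exI conjI allI impI)
    show "H a / sqrt (v a) = h\<^sub>0" using H_a v_pos[of a] by simp
    fix t assume "a \<le> t"
    then show "((\<lambda>s. H s / sqrt (v s)) has_real_derivative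
        sqrt ((max (H t / sqrt (v t)) 0)\<^sup>2 - 1) - mod_v v t * (H t / sqrt (v t))) (at t within {a..})"
      using modified_hubble_has_real_derivative[OF H_deriv v_deriv v_pos] mod_v_eq[OF v_deriv v_pos]
      by simp
  qed
qed

lemma solves_mod_eq_if_above_one:
  assumes "\<forall>t\<in>T. (h has_real_derivative sqrt ((max (h t) 0)\<^sup>2 - 1) - mod_v v t * h t) (at t within T)"
    and "S \<subseteq> T" and "\<forall>t\<in>S. 1 \<le> h t"
  shows "solves_mod_eq v h S"
  unfolding solves_mod_eq_def
proof
  fix t assume "t \<in> S"
  with assms have "(h has_real_derivative sqrt ((max (h t) 0)\<^sup>2 - 1) - mod_v v t * h t) (at t within S)"
    by (auto intro: DERIV_subset)
  moreover have "max (h t) 0 = h t" using assms(3) \<open>t \<in> S\<close> by auto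
  ultimately show "(h has_real_derivative sqrt ((h t)\<^sup>2 - 1) - mod_v v t * h t) (at t within S)"
    by simp
qed

lemma first_crossing:
  fixes h :: "real \<Rightarrow> real"
  assumes h_continuous: "continuous_on {a..} h" and "k < h a" and "a \<le> b" "h b \<le> k"
  obtains t\<^sub>1 where "a < t\<^sub>1" "h t\<^sub>1 = k" "\<forall>t\<in>{a..<t\<^sub>1}. k < h t"
proof -
  define P where "P = {a..} \<inter> h -` {..k}"
  have "P \<noteq> {}" "bdd_below P" using assms by (auto simp: P_def intro: bdd_belowI[where m = a])
  moreover have "closed P"
    unfolding P_def by (rule continuous_closed_preimage[OF h_continuous]) auto
  ultimately have "Inf P \<in> P" by (rule closed_contains_Inf)
  then have Inf_ge: "a \<le> Inf P" and "h (Inf P) \<le> k" by (auto simp: P_def)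
  have below: "k < h t" if "t \<in> {a..<Inf P}" for t
    using cInf_lower[OF _ \<open>bdd_below P\<close>, of t] that by (force simp: P_def)
  obtain x where x: "a \<le> x" "x \<le> Inf P" "h x = k"
    using IVT2'[of h "Inf P" k a] \<open>h (Inf P) \<le> k\<close> \<open>k < h a\<close> Inf_ge
      continuous_on_subset[OF h_continuous] by force
  then have "x = Inf P" using below[of x] by force
  with x have "h (Inf P) = k" by simp
  moreover have "a < Inf P" using Inf_ge \<open>h (Inf P) = k\<close> \<open>k < h a\<close> by (cases "a = Inf P") auto
  ultimately show ?thesis using below that by blast
qed

theorem proposition3:
  fixes v :: "real \<Rightarrow> real" and \<phi>\<^sub>0 h\<^sub>0 :: real
  assumes "smooth_fun v"
    and "\<And>\<phi>. \<phi> \<ge> \<phi>\<^sub>0 \<Longrightarrow> v \<phi> > 0"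
    and "\<And>\<phi>. \<phi> \<ge> \<phi>\<^sub>0 \<Longrightarrow> deriv v \<phi> > 0"
    and "h\<^sub>0 > 1"
  shows "\<exists>h. h \<phi>\<^sub>0 = h\<^sub>0 \<and>
    ((\<exists>\<phi>\<^sub>1 > \<phi>\<^sub>0. solves_mod_eq v h {\<phi>\<^sub>0..\<phi>\<^sub>1}
        \<and> (\<forall>\<phi>\<in>{\<phi>\<^sub>0..<\<phi>\<^sub>1}. h \<phi> > 1) \<and> h \<phi>\<^sub>1 = 1
        \<and> (h has_real_derivative (- mod_v v \<phi>\<^sub>1)) (at \<phi>\<^sub>1 within {\<phi>\<^sub>0..\<phi>\<^sub>1})
        \<and> - mod_v v \<phi>\<^sub>1 < 0)
     \<or> (solves_mod_eq v h {\<phi>\<^sub>0..} \<and> (\<forall>\<phi>\<ge>\<phi>\<^sub>0. h \<phi> \<ge> 1)))"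
proof -
  have v_deriv: "(v has_real_derivative deriv v t) (at t)" for t
    using \<open>smooth_fun v\<close> unfolding smooth_fun_def
    by (metis DERIV_deriv_iff_real_differentiable funpow_0)
  obtain h where h_start: "h \<phi>\<^sub>0 = h\<^sub>0" and h_deriv: "\<forall>t\<in>{\<phi>\<^sub>0..}.
      (h has_real_derivative sqrt ((max (h t) 0)\<^sup>2 - 1) - mod_v v t * h t) (at t within {\<phi>\<^sub>0..})"
    using modified_hubble_clipped_exists[where a = \<phi>\<^sub>0 and h\<^sub>0 = h\<^sub>0, OF v_deriv assms(2)] by auto
  show ?thesis
  proof (cases "\<forall>t\<ge>\<phi>\<^sub>0. 1 \<le> h t")
    case True
    then show ?thesis using h_start solves_mod_eq_if_above_one[OF h_deriv] by auto
  next
    case False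
    then obtain b where "\<phi>\<^sub>0 \<le> b" "h b \<le> 1" by auto
    moreover have "continuous_on {\<phi>\<^sub>0..} h" using h_deriv by (intro DERIV_continuous_on) auto
    ultimately obtain \<phi>\<^sub>1 where "\<phi>\<^sub>0 < \<phi>\<^sub>1" "h \<phi>\<^sub>1 = 1" and above: "\<forall>t\<in>{\<phi>\<^sub>0..<\<phi>\<^sub>1}. 1 < h t"
      using first_crossing[of \<phi>\<^sub>0 h 1 b] h_start \<open>h\<^sub>0 > 1\<close> by auto
    then have sol: "solves_mod_eq v h {\<phi>\<^sub>0..\<phi>\<^sub>1}"
      by (intro solves_mod_eq_if_above_one[OF h_deriv]) (auto simp: le_less)
    then have "(h has_real_derivative - mod_v v \<phi>\<^sub>1) (at \<phi>\<^sub>1 within {\<phi>\<^sub>0..\<phi>\<^sub>1})"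
      using \<open>\<phi>\<^sub>0 < \<phi>\<^sub>1\<close> \<open>h \<phi>\<^sub>1 = 1\<close> unfolding solves_mod_eq_def
      by (auto dest: bspec[of _ _ \<phi>\<^sub>1])
    moreover have "0 < mod_v v \<phi>\<^sub>1"
      using mod_v_eq[OF v_deriv assms(2)] assms(2,3) \<open>\<phi>\<^sub>0 < \<phi>\<^sub>1\<close> by simp
    ultimately show ?thesis using h_start sol above \<open>\<phi>\<^sub>0 < \<phi>\<^sub>1\<close> \<open>h \<phi>\<^sub>1 = 1\<close> by auto
  qed
qed

end
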